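(* The limit $\displaystyle\lim_{n\to\infty}\Big(\operatorname{li}(n)-\sum_{k=1}^n\frac{1}{H_k-\gamma}\Big)$ (over positive integers $n$) exists, where $\operatorname{li}(x)=\int_0^x\frac{dt}{\log t}$ (Cauchy principal value), $H_k=\sum_{j=1}^k\frac1j$, and $\gamma$ is the Euler–Mascheroni constant. *)

theory Defs
  imports "HOL-Analysis.Analysis"
begin

text \<open>Logarithmic integral as a Cauchy principal value at the singularity t = 1:
  li x = lim_{e -> 0+} ( int_0^{1-e} dt/ln t + int_{1+e}^x dt/ln t ), intended for x > 1.
  (The value at x = 1 is junk; it does not affect limits as x -> infinity.)\<close>
definition li :: "real \<Rightarrow> real" where
  "li x = Lim (at_right 0)
     (\<lambda>e. integral {0..1 - e} (\<lambda>t. 1 / ln t) + integral {1 + e..x} (\<lambda>t. 1 / ln t))"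

end

theory Submission
  imports Defs "HOL-Real_Asymp.Real_Asymp"
begin

(* Subtracting the pole 1/(t - 1) from 1/ln t leaves a function that is continuous on [0, oo),
   so for x > 1 the principal value is li x = integral_0^x (1/ln t - 1/(t - 1)) dt + ln (x - 1).
   Hence li' = 1/ln on (1, oo), and by the mean value theorem
   1/ln (n + 1) <= li (n + 1) - li n <= 1/ln n.  Since ln n <= H_n - gamma <= ln (n + 1),
   the increments of a_n = li n - sum_{k <= n} 1/(H_k - gamma) lie between 0 and
   1/ln n - 1/ln (n + 2).  So a_n increases while a_n + 1/ln n + 1/ln (n + 1) decreases,
   and a_n converges. *)

lemma convergent_incseq_telescoping_bound:
  fixes a c :: "nat \<Rightarrow> real"
  assumes "\<And>n. a n \<le> a (Suc n)"
    and "\<And>n. a (Suc n) - a n \<le> c n - c (Suc n)"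
    and "\<And>n. 0 \<le> c n"
  shows "convergent a"
proof -
  have "decseq (\<lambda>n. a n + c n)"
    using assms(2) by (intro decseq_SucI) (simp add: algebra_simps)
  then have "a n \<le> a 0 + c 0" for n
    using assms(3)[of n] decseqD[of _ 0 n] by fastforce
  moreover have "incseq a"
    using assms(1) by (rule incseq_SucI)
  ultimately show ?thesis
    using incseq_convergent convergentI by metis
qed

definition inverse_ln_minus_pole :: "real \<Rightarrow> real" where
  "inverse_ln_minus_pole t = (if t = 1 then 1 / 2 else 1 / ln t - 1 / (t - 1))"

lemma continuous_on_inverse_ln_minus_pole: "continuous_on {0..} inverse_ln_minus_pole"
proof (rule continuous_on_eq_continuous_within[THEN iffD2], intro ballI)
  fix x :: real assume "x \<in> {0..}"
  then consider "x = 0" | "x = 1" | "x > 0" "x \<noteq> 1" by force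
  then show "continuous (at x within {0..}) inverse_ln_minus_pole"
  proof cases
    case 1
    have "((\<lambda>t::real. 1 / ln t - 1 / (t - 1)) \<longlongrightarrow> 1) (at_right 0)" by real_asymp
    moreover have "eventually (\<lambda>t. 1 / ln t - 1 / (t - 1) = inverse_ln_minus_pole t) (at_right 0)"
      using order_tendstoD(2)[OF tendsto_ident_at zero_less_one]
      by eventually_elim (simp add: inverse_ln_minus_pole_def)
    ultimately have "(inverse_ln_minus_pole \<longlongrightarrow> 1) (at_right 0)"
      by (rule Lim_transform_eventually)
    \<comment> \<open>Since ln 0 = 0 in HOL, the value at 0 is 1 / 0 - 1 / (0 - 1) = 1, the right limit.\<close>
    then show ?thesis
      using 1 by (simp add: continuous_within at_within_Ici_at_right inverse_ln_minus_pole_def)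
  next
    case 2
    have "((\<lambda>t::real. 1 / ln t - 1 / (t - 1)) \<longlongrightarrow> 1 / 2) (at 1)" by real_asymp
    then have "isCont inverse_ln_minus_pole 1"
      unfolding continuous_at by (subst LIM_equal) (auto simp: inverse_ln_minus_pole_def)
    then show ?thesis
      using 2 continuous_at_imp_continuous_within by blast
  next
    case 3
    have "eventually (\<lambda>t. 1 / ln t - 1 / (t - 1) = inverse_ln_minus_pole t) (nhds x)"
      using t1_space_nhds[OF 3(2)] by eventually_elim (simp add: inverse_ln_minus_pole_def)
    moreover have "isCont (\<lambda>t. 1 / ln t - 1 / (t - 1)) x"
      using 3 by (auto intro!: continuous_intros)
    ultimately have "isCont inverse_ln_minus_pole x"
      by (rule isCont_cong[THEN iffD1])
    then show ?thesis
      by (rule continuous_at_imp_continuous_within)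
  qed
qed

lemma inverse_ln_minus_pole_integrable: "0 \<le> a \<Longrightarrow> inverse_ln_minus_pole integrable_on {a..b}"
  by (intro integrable_continuous_interval continuous_on_subset[OF continuous_on_inverse_ln_minus_pole])
    auto

lemma has_integral_inverse_diff_one:
  fixes a b :: real
  assumes "a \<le> b" "1 \<notin> {a..b}"
  shows "((\<lambda>t. 1 / (t - 1)) has_integral ln (abs (b - 1)) - ln (abs (a - 1))) {a..b}"
proof -
  obtain s :: real where s: "s = 1 \<or> s = -1" "\<And>t. t \<in> {a..b} \<Longrightarrow> \<bar>t - 1\<bar> = s * (t - 1)"
    using assms by (cases "b < 1") (auto intro: that[of "-1"] that[of 1])
  have "((\<lambda>t. 1 / (t - 1)) has_integral ln (s * (b - 1)) - ln (s * (a - 1))) {a..b}"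
  proof (rule fundamental_theorem_of_calculus[OF \<open>a \<le> b\<close>])
    fix t assume t: "t \<in> {a..b}"
    then have "s * (t - 1) > 0"
      using s assms by (metis zero_less_abs_iff eq_iff_diff_eq_0)
    then have "((\<lambda>t. ln (s * (t - 1))) has_real_derivative 1 / (t - 1)) (at t within {a..b})"
      using s(1) by (auto intro!: derivative_eq_intros simp: field_simps)
    then show "((\<lambda>t. ln (s * (t - 1))) has_vector_derivative 1 / (t - 1)) (at t within {a..b})"
      by (simp add: has_real_derivative_iff_has_vector_derivative)
  qed
  moreover have "ln (s * (b - 1)) - ln (s * (a - 1)) = ln (abs (b - 1)) - ln (abs (a - 1))"
    using s(2) assms by simp
  ultimately show ?thesis by simp
qed

lemma integral_inverse_ln_avoiding_one:
  fixes a b :: real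
  assumes "0 \<le> a" "a \<le> b" "1 \<notin> {a..b}"
  shows "integral {a..b} (\<lambda>t. 1 / ln t)
    = integral {a..b} inverse_ln_minus_pole + (ln (abs (b - 1)) - ln (abs (a - 1)))"
proof -
  have "((\<lambda>t. inverse_ln_minus_pole t + 1 / (t - 1)) has_integral
      integral {a..b} inverse_ln_minus_pole + (ln (abs (b - 1)) - ln (abs (a - 1)))) {a..b}"
    using assms by (intro has_integral_add has_integral_inverse_diff_one integrable_integral
        inverse_ln_minus_pole_integrable)
  then have "((\<lambda>t. 1 / ln t) has_integral
      integral {a..b} inverse_ln_minus_pole + (ln (abs (b - 1)) - ln (abs (a - 1)))) {a..b}"
    by (rule has_integral_eq[rotated]) (use assms in \<open>auto simp: inverse_ln_minus_pole_def\<close>)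
  then show ?thesis
    by (rule integral_unique)
qed

lemma li_eq_integral_inverse_ln_minus_pole:
  assumes "x > 1"
  shows "li x = integral {0..x} inverse_ln_minus_pole + ln (x - 1)"
proof -
  define G where "G y = integral {0..y} inverse_ln_minus_pole" for y
  have "(G has_real_derivative inverse_ln_minus_pole 1) (at 1 within {0..2})"
    unfolding G_def
    by (intro integral_has_real_derivative continuous_on_subset[OF continuous_on_inverse_ln_minus_pole]) auto
  then have "isCont G 1"
    by (simp add: at_within_interior[of 1 "{0..2}"] DERIV_isCont)
  then have "((\<lambda>e. G (1 - e) - G (1 + e) + G x + ln (x - 1))
      \<longlongrightarrow> G 1 - G 1 + G x + ln (x - 1)) (at_right 0)"
    by (intro tendsto_intros isCont_tendsto_compose[of 1 G]) (auto intro!: tendsto_eq_intros)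
  moreover have "eventually (\<lambda>e. G (1 - e) - G (1 + e) + G x + ln (x - 1) =
      integral {0..1 - e} (\<lambda>t. 1 / ln t) + integral {1 + e..x} (\<lambda>t. 1 / ln t)) (at_right 0)"
    unfolding eventually_at_right_field
  proof (intro exI conjI allI impI)
    show "0 < min 1 (x - 1)"
      using assms by simp
    fix e :: real
    assume e: "0 < e" "e < min 1 (x - 1)"
    have "integral {0..1 - e} (\<lambda>t. 1 / ln t) = G (1 - e) + ln e"
      using e by (subst integral_inverse_ln_avoiding_one) (auto simp: G_def)
    moreover have "G (1 + e) + integral {1 + e..x} inverse_ln_minus_pole = G x"
      unfolding G_def using e
      by (intro Henstock_Kurzweil_Integration.integral_combine inverse_ln_minus_pole_integrable) auto
    moreover have "integral {1 + e..x} (\<lambda>t. 1 / ln t)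
        = integral {1 + e..x} inverse_ln_minus_pole + ln (x - 1) - ln e"
      using e by (subst integral_inverse_ln_avoiding_one) auto
    ultimately show "G (1 - e) - G (1 + e) + G x + ln (x - 1) =
        integral {0..1 - e} (\<lambda>t. 1 / ln t) + integral {1 + e..x} (\<lambda>t. 1 / ln t)"
      by simp
  qed
  ultimately have "((\<lambda>e. integral {0..1 - e} (\<lambda>t. 1 / ln t) + integral {1 + e..x} (\<lambda>t. 1 / ln t))
      \<longlongrightarrow> G x + ln (x - 1)) (at_right 0)"
    by (simp add: tendsto_cong)
  then show ?thesis
    unfolding li_def G_def by (simp add: tendsto_Lim)
qed

lemma has_real_derivative_li:
  assumes "x > 1"
  shows "(li has_real_derivative 1 / ln x) (at x)"
proof (rule has_field_derivative_transform_within_open)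
  let ?F = "\<lambda>y. integral {0..y} inverse_ln_minus_pole + ln (y - 1)"
  have "((\<lambda>y. integral {0..y} inverse_ln_minus_pole) has_real_derivative inverse_ln_minus_pole x)
      (at x within {0..x + 1})"
    using assms
    by (intro integral_has_real_derivative continuous_on_subset[OF continuous_on_inverse_ln_minus_pole])
      auto
  then have "(?F has_real_derivative inverse_ln_minus_pole x + 1 / (x - 1)) (at x within {0..x + 1})"
    using assms by (auto intro!: derivative_eq_intros)
  then show "(?F has_real_derivative 1 / ln x) (at x)"
    using assms by (simp add: at_within_interior[of x "{0..x + 1}"] inverse_ln_minus_pole_def)
  show "\<And>y. y \<in> {1<..} \<Longrightarrow> ?F y = li y"
    by (simp add: li_eq_integral_inverse_ln_minus_pole)
qed (use assms in auto)

lemma li_diff_bounds: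
  assumes "1 < x" "x < y"
  shows "(y - x) / ln y \<le> li y - li x" "li y - li x \<le> (y - x) / ln x"
proof -
  obtain z where z: "x < z" "z < y" "li y - li x = (y - x) * (1 / ln z)"
    using MVT2[of x y li "\<lambda>z. 1 / ln z"] assms has_real_derivative_li by auto
  have "0 < ln x" "ln x \<le> ln z" "ln z \<le> ln y" "0 < ln z" "0 < ln y"
    using assms z by auto
  then show "(y - x) / ln y \<le> li y - li x" "li y - li x \<le> (y - x) / ln x"
    using assms z(3) by (auto intro!: divide_left_mono)
qed

lemma harm_minus_euler_mascheroni_bounds:
  assumes "n > 0"
  shows "ln (real n) \<le> harm n - euler_mascheroni" "harm n - euler_mascheroni \<le> ln (real n + 1)"
proof -
  show "ln (real n) \<le> harm n - euler_mascheroni"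
    using LIMSEQ_le_const2[OF euler_mascheroni_LIMSEQ, of "harm n - ln n"]
      euler_mascheroni_sequence_decreasing[OF assms] by fastforce
  obtain m where "n = Suc m"
    using assms gr0_implies_Suc by blast
  then have "harm n - ln (real n + 1) + 1 / real (2 * (n + 1)) \<le> euler_mascheroni"
    using euler_mascheroni_lower[of m] by (simp add: add_ac)
  moreover have "0 \<le> 1 / real (2 * (n + 1))"
    by simp
  ultimately show "harm n - euler_mascheroni \<le> ln (real n + 1)"
    by linarith
qed

lemma li_minus_harm_sum_increment_bounds:
  fixes n :: nat
  assumes "n \<ge> 2"
  defines "d \<equiv> li (real n + 1) - li (real n) - 1 / (harm (Suc n) - euler_mascheroni)"
  shows "0 \<le> d" "d \<le> 1 / ln (real n) - 1 / ln (real n + 2)"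
proof -
  have li: "1 / ln (real n + 1) \<le> li (real n + 1) - li (real n)"
    "li (real n + 1) - li (real n) \<le> 1 / ln (real n)"
    using li_diff_bounds[of n "n + 1"] assms by (auto simp: add.commute)
  have "ln (real n + 1) \<le> harm (Suc n) - euler_mascheroni"
    "harm (Suc n) - euler_mascheroni \<le> ln (real n + 2)"
    using harm_minus_euler_mascheroni_bounds[of "Suc n"] by (auto simp: add_ac)
  moreover have "0 < ln (real n + 1)"
    using assms by simp
  ultimately have "1 / ln (real n + 2) \<le> 1 / (harm (Suc n) - euler_mascheroni)"
    "1 / (harm (Suc n) - euler_mascheroni) \<le> 1 / ln (real n + 1)"
    by (intro frac_le; linarith)+
  with li show "0 \<le> d" "d \<le> 1 / ln (real n) - 1 / ln (real n + 2)"
    unfolding d_def by linarith+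
qed

theorem lemma7p12:
  shows "convergent (\<lambda>n::nat. li (real n) - (\<Sum>k=1..n. 1 / (harm k - (euler_mascheroni::real))))"
proof -
  define a where "a n = li (real n) - (\<Sum>k=1..n. 1 / (harm k - (euler_mascheroni::real)))" for n
  define c where "c n = 1 / ln (real n + 2) + 1 / ln (real n + 3)" for n
  have "convergent (\<lambda>n. a (n + 2))"
  proof (rule convergent_incseq_telescoping_bound)
    fix n
    have "a (Suc n + 2) - a (n + 2) =
        li (real (n + 2) + 1) - li (real (n + 2)) - 1 / (harm (Suc (n + 2)) - euler_mascheroni)"
      by (simp add: a_def add_ac)
    then show "a (n + 2) \<le> a (Suc n + 2)" "a (Suc n + 2) - a (n + 2) \<le> c n - c (Suc n)"
      using li_minus_harm_sum_increment_bounds[of "n + 2"] by (auto simp: c_def add_ac)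
    show "0 \<le> c n"
      by (simp add: c_def)
  qed
  then show ?thesis
    unfolding a_def by (rule convergent_ignore_initial_segment[THEN iffD1])
qed

end
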